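(* Let $\mathbb{K}$ be an algebraically closed field of characteristic $0$, let $p\in\mathbb{K}[x,y]\setminus(\mathbb{K}[x]\cup\mathbb{K}[y])$ be irreducible with $\mathrm{F}(p)\cong\mathbb{K}$, and let $r\in\mathbb{K}[x,y]_p\setminus\langle p\rangle$. Assume that the orbit $\mathcal{O}$ of a pole of $r$ on the curve $C$ associated with $p$ is infinite. Then there is an infinite path in the graph of $\mathcal{O}$ that contains no cycle (its vertices are pairwise distinct), starts at some pole of $r$, and contains no other pole of $r$.
   Context: $\mathbb{K}[x,y]_p$ is the set of $h\in\mathbb{K}(x,y)$ whose reduced denominator is not divisible by $p$; $\langle p\rangle=\{qp:q\in\mathbb{K}[x,y]_p\}$; $\mathrm{F}(p)=\{(f,g)\in\mathbb{K}(x)\times\mathbb{K}(y):f-g\in\langle p\rangle\}$, a field under componentwise operations; $\mathrm{F}(p)\cong\mathbb{K}$ means it consists only of pairs of equal constants. $C\subset\mathbb{P}^1(\mathbb{K})\times\mathbb{P}^1(\mathbb{K})$ is the zero set of the bi-homogenization $x_0^{\deg_x p}y_0^{\deg_y p}p(x_1/x_0,y_1/y_0)$. Orbits are the classes of the smallest equivalence relation on $C$ with $(a,b)\sim(c,d)$ whenever $a=c$ or $b=d$. The graph of an orbit has the elements of the orbit as vertices, two distinct vertices forming an edge when they share a coordinate; a path is a sequence of vertices with consecutive ones adjacent. A point $(\infty,\infty)\in C$ is a pole of $r$ if there is a Puiseux series $\varphi\in\mathbb{K}\{\{x^{-1}\}\}$ with $p(x,\varphi)=0$, $\deg\varphi>0$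 and $\deg r(x,\varphi)>0$ (degree = largest exponent of $x$); a general point $(s_1,s_2)\in C$ is a pole of $r$ if, for a pair $T$ of Möbius transformations sending $(s_1,s_2)$ to $(\infty,\infty)$, $(\infty,\infty)$ is a pole of $r\circ T^{-1}$ on the curve of the numerator of $p\circ T^{-1}$. *)

theory Defs
  imports "HOL-Computational_Algebra.Polynomial_Factorial"
          "HOL-Computational_Algebra.Fraction_Field"
          "HOL-Computational_Algebra.Formal_Laurent_Series"
begin

text \<open>Bivariate polynomials K[x,y] are represented as 'a poly poly: the outer
  variable is y, the coefficients are polynomials in x. So coeff (coeff p j) i
  is the coefficient of x^i y^j. K(x,y) is the fraction field 'a poly poly fract,
  K(x) and K(y) are 'a poly fract (embedded into K(x,y) as below).\<close>

definition ypoly :: "'a::zero poly \<Rightarrow> 'a poly poly" where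
  "ypoly q = map_poly (\<lambda>c. [:c:]) q"

definition degx :: "'a::zero poly poly \<Rightarrow> nat" where
  "degx p = Max ((\<lambda>j. degree (coeff p j)) ` {..degree p})"

definition degy :: "'a::zero poly poly \<Rightarrow> nat" where
  "degy p = degree p"

definition loc_ring :: "'a::field poly poly \<Rightarrow> 'a poly poly fract set" where
  "loc_ring p = {h. \<exists>a b. b \<noteq> 0 \<and> \<not> p dvd b \<and> h = Fract a b}"

definition loc_ideal :: "'a::field poly poly \<Rightarrow> 'a poly poly fract set" where
  "loc_ideal p = {Fract p 1 * h | h. h \<in> loc_ring p}"

definition Fp :: "'a::field poly poly \<Rightarrow> ('a poly fract \<times> 'a poly fract) set" where
  "Fp p = {(f, g). \<exists>a b c d. b \<noteq> 0 \<and> d \<noteq> 0 \<and> f = Fract a b \<and> g = Fract c d \<and>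
              Fract [:a:] [:b:] - Fract (ypoly c) (ypoly d) \<in> loc_ideal p}"

text \<open>F(p) is isomorphic to K: it consists only of pairs of equal constants.\<close>
definition Fp_trivial :: "'a::field poly poly \<Rightarrow> bool" where
  "Fp_trivial p \<longleftrightarrow> Fp p \<subseteq> {(Fract [:k:] 1, Fract [:k:] 1) | k. True}"

text \<open>Points of P^1(K): None is infinity, Some a is the affine point a.\<close>
type_synonym 'a pt = "'a option \<times> 'a option"

definition hcoords :: "'a::{zero,one} option \<Rightarrow> 'a \<times> 'a" where
  "hcoords s = (case s of None \<Rightarrow> (0, 1) | Some a \<Rightarrow> (1, a))"

text \<open>Bi-homogenization x0^dx y0^dy p(x1/x0, y1/y0) evaluated at homogeneous
  coordinates of a point of P^1 x P^1.\<close>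
definition bihom_eval :: "'a::field poly poly \<Rightarrow> 'a pt \<Rightarrow> 'a" where
  "bihom_eval p P = (case (hcoords (fst P), hcoords (snd P)) of ((x0, x1), (y0, y1)) \<Rightarrow>
     (\<Sum>i\<le>degx p. \<Sum>j\<le>degy p. coeff (coeff p j) i * x1 ^ i * x0 ^ (degx p - i)
                                   * y1 ^ j * y0 ^ (degy p - j)))"

definition curve :: "'a::field poly poly \<Rightarrow> 'a pt set" where
  "curve p = {P. bihom_eval p P = 0}"

definition orbit_step :: "'a::field poly poly \<Rightarrow> ('a pt \<times> 'a pt) set" where
  "orbit_step p = {(P, Q). P \<in> curve p \<and> Q \<in> curve p \<and> (fst P = fst Q \<or> snd P = snd Q)}"

definition orbit :: "'a::field poly poly \<Rightarrow> 'a pt \<Rightarrow> 'a pt set" where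
  "orbit p P = {Q. (P, Q) \<in> (orbit_step p)\<^sup>*}"

definition adjacent :: "'a pt \<Rightarrow> 'a pt \<Rightarrow> bool" where
  "adjacent P Q \<longleftrightarrow> P \<noteq> Q \<and> (fst P = fst Q \<or> snd P = snd Q)"

text \<open>Puiseux series in x^(-1): a Puiseux series of ramification n is a formal
  Laurent series phi in t with x = t^(-n), i.e. t = x^(-1/n).  Its degree
  (largest exponent of x) is  - fls_subdegree phi / n, so it is positive iff
  phi is nonzero with negative subdegree.\<close>
definition puiseux_x :: "nat \<Rightarrow> 'a::field fls" where
  "puiseux_x n = fls_X_intpow (- int n)"

definition pos_deg :: "'a::field fls \<Rightarrow> bool" where
  "pos_deg v \<longleftrightarrow> v \<noteq> 0 \<and> fls_subdegree v < 0"

definition eval2 :: "'a::field poly poly \<Rightarrow> 'a fls \<Rightarrow> 'a fls \<Rightarrow> 'a fls" where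
  "eval2 q X Y = poly (map_poly (\<lambda>c. poly (map_poly fls_const c) X) q) Y"

text \<open>Inverse T^{-1} of the Moebius transformation T sending s to infinity:
  identity if s = infinity, and x \<mapsto> s + 1/x (so T(x) = 1/(x - s)) otherwise.\<close>
definition moebius_inv :: "'a::field option \<Rightarrow> 'a fls \<Rightarrow> 'a fls" where
  "moebius_inv s X = (case s of None \<Rightarrow> X | Some c \<Rightarrow> fls_const c + inverse X)"

text \<open>(s1,s2) in C is a pole of r: there is a Puiseux series phi of positive
  degree with (numerator of p o T^{-1})(x, phi) = 0 and deg (r o T^{-1})(x, phi) > 0.
  Since x and phi are nonzero, the numerator vanishes iff p(T^{-1} x, T^{-1} phi) = 0.
  r is given by any representation a/b with p not dividing b.\<close>
definition is_pole :: "'a::field poly poly \<Rightarrow> 'a poly poly fract \<Rightarrow> 'a pt \<Rightarrow> bool" where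
  "is_pole p r P \<longleftrightarrow> P \<in> curve p \<and>
     (\<exists>n a b (phi :: 'a fls). n > 0 \<and> r = Fract a b \<and> b \<noteq> 0 \<and> \<not> p dvd b \<and> pos_deg phi \<and>
        (let X = moebius_inv (fst P) (puiseux_x n); Y = moebius_inv (snd P) phi in
           eval2 p X Y = 0 \<and> pos_deg (eval2 a X Y / eval2 b X Y)))"

end

theory Submission
  imports Defs
begin

text \<open>Two points of \<open>C\<close> sharing a coordinate are connected in the orbit graph, and since
  \<open>p\<close> is irreducible and involves both variables, every horizontal and every vertical line
  meets \<open>C\<close> in finitely many points: the graph is locally finite.  By Koenig's lemma an
  infinite connected locally finite graph contains an injective ray starting at any vertex,
  in particular at the given pole.  The poles of \<open>r = a/b\<close> lie on the two lines at infinity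
  or among the common affine zeros of \<open>p\<close> and \<open>b\<close>; the latter are finite because
  \<open>p \<nmid> b\<close> yields a relation \<open>U p + V b = d(x) \<noteq> 0\<close>.  Cutting the ray at its last pole
  gives the path.\<close>

section \<open>Koenig's lemma\<close>

lemma finitely_branching_infinite_path:
  assumes fin: "\<And>x. finite {y. (x, y) \<in> R}"
    and inf: "infinite {y. (x0, y) \<in> R\<^sup>*}"
  shows "\<exists>v. v 0 = x0 \<and> (\<forall>k. (v k, v (Suc k)) \<in> R)"
proof -
  define good where "good x \<longleftrightarrow> infinite {y. (x, y) \<in> R\<^sup>*}" for x
  have good_succ: "\<exists>y. (x, y) \<in> R \<and> good y" if "good x" for x
  proof (rule ccontr)
    assume "\<not> (\<exists>y. (x, y) \<in> R \<and> good y)"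
    then have "finite (\<Union>y\<in>{y. (x, y) \<in> R}. {z. (y, z) \<in> R\<^sup>*})"
      using fin by (auto simp: good_def)
    moreover have "{z. (x, z) \<in> R\<^sup>*} \<subseteq> insert x (\<Union>y\<in>{y. (x, y) \<in> R}. {z. (y, z) \<in> R\<^sup>*})"
      by (auto elim: converse_rtranclE)
    ultimately show False
      using that finite_subset unfolding good_def by blast
  qed
  define v where "v = rec_nat x0 (\<lambda>_ x. SOME y. (x, y) \<in> R \<and> good y)"
  have v_Suc: "v (Suc k) = (SOME y. (v k, y) \<in> R \<and> good y)" for k
    by (simp add: v_def)
  have v_good: "good (v k)" for k
  proof (induction k)
    case 0
    show ?case using inf by (simp add: v_def good_def)
  next
    case (Suc k)
    show ?case using someI_ex[OF good_succ[OF Suc]] unfolding v_Suc by blast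
  qed
  have "(v k, v (Suc k)) \<in> R" for k
    using someI_ex[OF good_succ[OF v_good[of k]]] unfolding v_Suc by blast
  moreover have "v 0 = x0" by (simp add: v_def)
  ultimately show ?thesis by blast
qed

lemma koenig_injective_ray:
  assumes fin: "\<And>x. finite {y. (x, y) \<in> R}"
    and inf: "infinite {y. (x0, y) \<in> R\<^sup>*}"
  shows "\<exists>v. v 0 = x0 \<and> inj v \<and> (\<forall>k. (v k, v (Suc k)) \<in> R)"
proof -
  define d where "d y = (LEAST n. (x0, y) \<in> R ^^ n)" for y
  text \<open>Keeping only the edges of a breadth-first search tree forces injectivity.\<close>
  define T where "T = {(y, z). (y, z) \<in> R \<and> d z = Suc (d y)}"
  have d_le: "d y \<le> n" if "(x0, y) \<in> R ^^ n" for y n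
    unfolding d_def using that by (rule Least_le)
  have d_attained: "(x0, y) \<in> R ^^ d y" if "(x0, y) \<in> R\<^sup>*" for y
    using that unfolding d_def rtrancl_power by (auto intro: LeastI)
  have shortest_path: "(x0, y) \<in> T\<^sup>*" if "(x0, y) \<in> R ^^ n" "d y = n" for n y
    using that
  proof (induction n arbitrary: y)
    case 0
    then show ?case by simp
  next
    case (Suc n)
    then obtain z where z: "(x0, z) \<in> R ^^ n" "(z, y) \<in> R" by auto
    have "(x0, y) \<in> R ^^ Suc (d z)"
      using d_attained[OF relpow_imp_rtrancl[OF z(1)]] z(2) by auto
    then have "d z = n"
      using d_le[OF z(1)] d_le[of y "Suc (d z)"] Suc.prems(2) by simp
    then show ?case
      using Suc.IH[OF z(1)] z(2) Suc.prems(2) by (auto simp: T_def intro: rtrancl_into_rtrancl)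
  qed
  have "{y. (x0, y) \<in> R\<^sup>*} \<subseteq> {y. (x0, y) \<in> T\<^sup>*}"
    using shortest_path d_attained by blast
  then have "infinite {y. (x0, y) \<in> T\<^sup>*}"
    using inf finite_subset by blast
  moreover have "finite {z. (y, z) \<in> T}" for y
    by (rule finite_subset[OF _ fin[of y]]) (auto simp: T_def)
  ultimately obtain v where v0: "v 0 = x0" and v_T: "\<And>k. (v k, v (Suc k)) \<in> T"
    using finitely_branching_infinite_path[of T x0] by blast
  have "d (v k) = k" for k
  proof (induction k)
    case 0
    show ?case using d_le[of x0 0] v0 by simp
  next
    case (Suc k)
    then show ?case using v_T[of k] by (simp add: T_def)
  qed
  then have "inj v"
    by (metis injI)
  moreover have "(v k, v (Suc k)) \<in> R" for k
    using v_T[of k] by (simp add: T_def)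
  ultimately show ?thesis
    using v0 by blast
qed

section \<open>Evaluation of bivariate polynomials\<close>

lemma map_poly_add_hom:
  assumes "h 0 = 0" "\<And>a b. h (a + b) = h a + h b"
  shows "map_poly h (p + q) = map_poly h p + map_poly h q"
  by (rule poly_eqI) (simp add: coeff_map_poly assms)

lemma map_poly_mult_hom:
  fixes h :: "'a::comm_semiring_0 \<Rightarrow> 'b::comm_semiring_0"
  assumes h0: "h 0 = 0" and h_add: "\<And>a b. h (a + b) = h a + h b"
    and h_mult: "\<And>a b. h (a * b) = h a * h b"
  shows "map_poly h (p * q) = map_poly h p * map_poly h q"
proof (rule poly_eqI)
  fix n
  have "h (\<Sum>i\<le>n. coeff p i * coeff q (n - i)) = (\<Sum>i\<le>n. h (coeff p i) * h (coeff q (n - i)))"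
    by (simp add: sum_comp_morphism[of h, OF h0 h_add, symmetric] o_def h_mult)
  then show "coeff (map_poly h (p * q)) n = coeff (map_poly h p * map_poly h q) n"
    by (simp add: coeff_map_poly coeff_mult h0)
qed

lemma eval2_mult:
  fixes a b :: "'a::field poly poly"
  shows "eval2 (a * b) X Y = eval2 a X Y * eval2 b X Y"
proof -
  define h :: "'a poly \<Rightarrow> 'a fls" where "h c = poly (map_poly fls_const c) X" for c
  have const_add: "fls_const (c + d) = fls_const c + fls_const d" for c d :: 'a
    by (simp add: fls_plus_const)
  have h_add: "h (c + d) = h c + h d" for c d
    by (simp add: h_def map_poly_add_hom[OF _ const_add])
  have h_mult: "h (c * d) = h c * h d" for c d
    by (simp add: h_def map_poly_mult_hom[OF _ const_add])
  have "h 0 = 0"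
    by (simp add: h_def)
  then show ?thesis
    unfolding eval2_def h_def[abs_def, symmetric]
    by (simp add: map_poly_mult_hom[of h, OF _ h_add h_mult])
qed

definition poly2 :: "'a::comm_semiring_1 poly poly \<Rightarrow> 'a \<Rightarrow> 'a \<Rightarrow> 'a" where
  "poly2 q c a = poly (poly q [:a:]) c"

lemma poly2_conv_map_poly: "poly2 q c a = poly (map_poly (\<lambda>r. poly r c) q) a"
  unfolding poly2_def by (induction q) (simp_all add: map_poly_pCons)

lemma poly_altdef_le:
  fixes q :: "'a::comm_semiring_1 poly"
  assumes "degree q \<le> N"
  shows "poly q x = (\<Sum>i\<le>N. coeff q i * x ^ i)"
  unfolding poly_altdef
  by (rule sum.mono_neutral_left) (use assms in \<open>auto simp: coeff_eq_0 not_le\<close>)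

lemma degree_coeff_le_degx: "degree (coeff p j) \<le> degx p"
proof (cases "j \<le> degree p")
  case True
  then show ?thesis unfolding degx_def by (intro Max_ge) auto
next
  case False
  then show ?thesis by (simp add: coeff_eq_0)
qed

lemma bihom_eval_affine:
  fixes p :: "'a::field poly poly"
  shows "bihom_eval p (Some c, Some a) = poly2 p c a"
proof -
  have "poly2 p c a = (\<Sum>j\<le>degree p. coeff (map_poly (\<lambda>r. poly r c) p) j * a ^ j)"
    unfolding poly2_conv_map_poly by (rule poly_altdef_le) (rule map_poly_degree_leq)
  also have "\<dots> = (\<Sum>j\<le>degree p. (\<Sum>i\<le>degx p. coeff (coeff p j) i * c ^ i) * a ^ j)"
    by (simp add: coeff_map_poly poly_altdef_le[OF degree_coeff_le_degx])
  also have "\<dots> = (\<Sum>i\<le>degx p. \<Sum>j\<le>degree p. coeff (coeff p j) i * c ^ i * a ^ j)"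
    by (subst sum.swap) (simp add: sum_distrib_right)
  finally show ?thesis
    by (simp add: bihom_eval_def hcoords_def degy_def)
qed

lemma bihom_eval_None_Some:
  fixes p :: "'a::field poly poly"
  shows "bihom_eval p (None, Some a) = poly (map_poly (\<lambda>r. coeff r (degx p)) p) a"
proof -
  have "bihom_eval p (None, Some a) =
     (\<Sum>i\<le>degx p. \<Sum>j\<le>degree p. (if i = degx p then coeff (coeff p j) i * a ^ j else 0))"
    unfolding bihom_eval_def hcoords_def degy_def
    by simp (intro sum.cong refl, auto simp: power_0_left)
  also have "\<dots> = (\<Sum>j\<le>degree p. coeff (coeff p j) (degx p) * a ^ j)"
    by (subst sum.swap) simp
  also have "\<dots> = poly (map_poly (\<lambda>r. coeff r (degx p)) p) a"
    by (subst poly_altdef_le[OF map_poly_degree_leq]) (simp add: coeff_map_poly)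
  finally show ?thesis .
qed

lemma bihom_eval_Some_None:
  fixes p :: "'a::field poly poly"
  shows "bihom_eval p (Some c, None) = poly (lead_coeff p) c"
proof -
  have "bihom_eval p (Some c, None) = (\<Sum>i\<le>degx p. coeff (lead_coeff p) i * c ^ i)"
    unfolding bihom_eval_def hcoords_def degy_def
    by (simp add: power_0_left if_distrib[of "(*) _"] sum.delta' cong: if_cong)
  also have "\<dots> = poly (lead_coeff p) c"
    by (rule poly_altdef_le[symmetric, OF degree_coeff_le_degx])
  finally show ?thesis .
qed

section \<open>Finiteness of the curve on horizontal and vertical lines\<close>

lemma finite_option_Collect:
  assumes "finite {a. P (Some a)}"
  shows "finite {y. P y}"
proof -
  have "{y. P y} \<subseteq> insert None (Some ` {a. P (Some a)})"
    by (auto simp: image_iff) (metis not_None_eq)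
  then show ?thesis
    using assms finite_subset by blast
qed

lemma linear_const_dvd_iff:
  fixes G :: "'a::field poly poly"
  shows "[:[:-c, 1:]:] dvd G \<longleftrightarrow> map_poly (\<lambda>r. poly r c) G = 0"
proof
  have hom: "map_poly (\<lambda>r. poly r c) (F * G) = map_poly (\<lambda>r. poly r c) F * map_poly (\<lambda>r. poly r c) G"
    for F G :: "'a poly poly"
    by (rule map_poly_mult_hom) simp_all
  assume "[:[:-c, 1:]:] dvd G"
  then obtain G' where "G = [:[:-c, 1:]:] * G'" ..
  then show "map_poly (\<lambda>r. poly r c) G = 0"
    by (simp only: hom) (simp add: map_poly_pCons)
next
  assume vanish: "map_poly (\<lambda>r. poly r c) G = 0"
  define d where "d = [:-c, 1:]"
  have "d dvd coeff G j" for j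
    using arg_cong[OF vanish, of "\<lambda>q. coeff q j"]
    by (simp add: d_def coeff_map_poly poly_eq_0_iff_dvd)
  then have "G = [:d:] * map_poly (\<lambda>r. r div d) G"
    by (intro poly_eqI) (simp add: coeff_map_poly)
  then show "[:[:-c, 1:]:] dvd G"
    unfolding d_def by (metis dvd_triv_left)
qed

lemma irreducible_eval_x_nonzero:
  fixes p :: "'a::field poly poly"
  assumes irr: "irreducible p" and deg: "degree p > 0"
  shows "map_poly (\<lambda>r. poly r c) p \<noteq> 0"
proof
  assume "map_poly (\<lambda>r. poly r c) p = 0"
  then obtain k where k: "p = [:[:-c, 1:]:] * k"
    unfolding linear_const_dvd_iff[symmetric] ..
  have "\<not> is_unit [:[:-c, 1:]:]"
    by (simp add: is_unit_const_poly_iff is_unit_poly_iff)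
  then have "is_unit k"
    using irreducibleD[OF irr k] by blast
  then have "degree k = 0"
    by (auto simp: is_unit_poly_iff)
  then show False
    using deg k degree_smult_le[of "[:-c, 1:]" k] by simp
qed

lemma irreducible_eval_y_nonzero:
  fixes p :: "'a::field poly poly"
  assumes irr: "irreducible p" and in_x: "\<exists>j. 0 < degree (coeff p j)"
  shows "poly p [:a:] \<noteq> 0"
proof
  assume "poly p [:a:] = 0"
  then obtain k where k: "p = [:-[:a:], 1:] * k"
    by (auto simp: poly_eq_0_iff_dvd)
  have "\<not> is_unit [:-[:a:], 1:]"
    by (simp add: is_unit_poly_iff)
  then have "is_unit k"
    using irreducibleD[OF irr k] by blast
  then obtain u where u: "k = [:u:]" "degree u = 0"
    by (auto simp: is_unit_poly_iff)
  then have "p = [:- smult a u, u:]"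
    using k by simp
  then have "degree (coeff p j) = 0" for j
    using u(2) degree_smult_le[of a u] by (cases j; cases "j - 1") simp_all
  then show False
    using in_x by simp
qed

lemma map_poly_coeff_degx_nonzero:
  fixes p :: "'a::field poly poly"
  assumes in_x: "\<exists>j. 0 < degree (coeff p j)"
  shows "map_poly (\<lambda>r. coeff r (degx p)) p \<noteq> 0"
proof -
  have "degx p \<in> (\<lambda>j. degree (coeff p j)) ` {..degree p}"
    unfolding degx_def by (rule Max_in) auto
  then obtain j0 where j0: "degree (coeff p j0) = degx p"
    by auto
  have "0 < degx p"
    using in_x degree_coeff_le_degx[of p] by (meson less_le_trans)
  then have "coeff (coeff p j0) (degx p) \<noteq> 0"
    using j0 by (metis leading_coeff_0_iff not_gr_zero degree_0)
  then have "coeff (map_poly (\<lambda>r. coeff r (degx p)) p) j0 \<noteq> 0"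
    by (simp add: coeff_map_poly)
  then show ?thesis
    by auto
qed

lemma finite_curve_fst_eq:
  fixes p :: "'a::field poly poly"
  assumes irr: "irreducible p" and deg: "degree p > 0" and in_x: "\<exists>j. 0 < degree (coeff p j)"
  shows "finite {Q \<in> curve p. fst Q = s}"
proof -
  have "finite {a. bihom_eval p (s, Some a) = 0}"
  proof (cases s)
    case None
    then show ?thesis
      using poly_roots_finite[OF map_poly_coeff_degx_nonzero[OF in_x]]
      by (simp add: bihom_eval_None_Some)
  next
    case (Some c)
    then show ?thesis
      using poly_roots_finite[OF irreducible_eval_x_nonzero[OF irr deg]]
      by (simp add: bihom_eval_affine poly2_conv_map_poly)
  qed
  then have "finite (Pair s ` {y. bihom_eval p (s, y) = 0})"
    by (intro finite_imageI finite_option_Collect)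
  moreover have "{Q \<in> curve p. fst Q = s} \<subseteq> Pair s ` {y. bihom_eval p (s, y) = 0}"
    by (auto simp: curve_def)
  ultimately show ?thesis
    using finite_subset by blast
qed

lemma finite_curve_snd_eq:
  fixes p :: "'a::field poly poly"
  assumes irr: "irreducible p" and in_x: "\<exists>j. 0 < degree (coeff p j)"
  shows "finite {Q \<in> curve p. snd Q = s}"
proof -
  have "finite {c. bihom_eval p (Some c, s) = 0}"
  proof (cases s)
    case None
    have "lead_coeff p \<noteq> 0"
      using irr by auto
    from poly_roots_finite[OF this] show ?thesis
      using None by (simp add: bihom_eval_Some_None)
  next
    case (Some a)
    then show ?thesis
      using poly_roots_finite[OF irreducible_eval_y_nonzero[OF irr in_x]]
      by (simp add: bihom_eval_affine poly2_def)
  qed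
  then have "finite ((\<lambda>x. (x, s)) ` {x. bihom_eval p (x, s) = 0})"
    by (intro finite_imageI finite_option_Collect)
  moreover have "{Q \<in> curve p. snd Q = s} \<subseteq> (\<lambda>x. (x, s)) ` {x. bihom_eval p (x, s) = 0}"
    by (auto simp: curve_def image_iff)
  ultimately show ?thesis
    using finite_subset by blast
qed

lemma orbit_step_finitely_branching:
  fixes p :: "'a::field poly poly"
  assumes "irreducible p" "degree p > 0" "\<exists>j. 0 < degree (coeff p j)"
  shows "finite {R. (Q, R) \<in> orbit_step p}"
proof -
  have "{R. (Q, R) \<in> orbit_step p} \<subseteq>
      {R \<in> curve p. fst R = fst Q} \<union> {R \<in> curve p. snd R = snd Q}"
    by (auto simp: orbit_step_def)
  then show ?thesis
    using finite_curve_fst_eq[OF assms] finite_curve_snd_eq[OF assms(1,3)] finite_subset by blast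
qed

section \<open>Common zeros of p and a polynomial it does not divide\<close>

lemma alg_closed_linear_factor:
  fixes d :: "'a::field poly"
  assumes alg: "\<And>q :: 'a poly. degree q > 0 \<Longrightarrow> \<exists>z. poly q z = 0" and deg: "degree d > 0"
  obtains c d' where "d = [:-c, 1:] * d'" "degree d' < degree d"
proof -
  obtain c where "poly d c = 0"
    using alg deg by blast
  then obtain d' where d': "d = [:-c, 1:] * d'"
    by (auto simp: poly_eq_0_iff_dvd)
  then have "d' \<noteq> 0"
    using deg by auto
  then have "degree d = degree [:-c, 1:] + degree d'"
    unfolding d' by (intro degree_mult_eq) auto
  then show ?thesis
    using that d' by simp
qed

lemma linear_const_factor_split:
  fixes G H M :: "'a::field poly poly"
  assumes eq: "[:[:-c, 1:]:] * M = G * H"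
  shows "\<exists>G1 H1 u v. M = G1 * H1 \<and> G = smult u G1 \<and> H = smult v H1"
proof -
  have nz: "[:[:-c, 1:]:] \<noteq> 0"
    by simp
  have "[:[:-c, 1:]:] dvd G * H"
    using eq by (metis dvd_triv_left)
  then have "map_poly (\<lambda>r. poly r c) G * map_poly (\<lambda>r. poly r c) H = 0"
    by (simp add: linear_const_dvd_iff map_poly_mult_hom)
  then have "[:[:-c, 1:]:] dvd G \<or> [:[:-c, 1:]:] dvd H"
    by (simp add: linear_const_dvd_iff)
  then consider G1 where "G = [:[:-c, 1:]:] * G1" | H1 where "H = [:[:-c, 1:]:] * H1"
    by (elim disjE dvdE) blast+
  then show ?thesis
  proof cases
    case 1
    then have "[:[:-c, 1:]:] * M = [:[:-c, 1:]:] * (G1 * H)"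
      using eq by (simp only: mult.assoc)
    then have "M = G1 * H"
      by (simp only: mult_left_cancel[OF nz])
    then show ?thesis
      using 1 by (intro exI[of _ G1] exI[of _ H] exI[of _ "[:-c, 1:]"] exI[of _ 1]) simp
  next
    case 2
    then have "[:[:-c, 1:]:] * M = [:[:-c, 1:]:] * (G * H1)"
      using eq by (simp only: mult.left_commute[of G])
    then have "M = G * H1"
      by (simp only: mult_left_cancel[OF nz])
    then show ?thesis
      using 2 by (intro exI[of _ G] exI[of _ H1] exI[of _ 1] exI[of _ "[:-c, 1:]"]) simp
  qed
qed

text \<open>Gauss's lemma for \<open>K[x][y]\<close>: a constant factor \<open>d(x)\<close> of a product can be
  removed by dividing the factors by constants.  Over an algebraically closed field
  it suffices to peel off the linear factors \<open>x - c\<close> of \<open>d\<close> one at a time; each is prime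
  in \<open>K[x][y]\<close> because setting \<open>x = c\<close> maps onto the domain \<open>K[y]\<close>.\<close>
lemma const_factor_cancel:
  fixes F G H :: "'a::field poly poly"
  assumes alg: "\<And>q :: 'a poly. degree q > 0 \<Longrightarrow> \<exists>z. poly q z = 0"
  shows "[:d:] * F = G * H \<Longrightarrow> d \<noteq> 0 \<Longrightarrow>
    \<exists>G' H' e f. F = G' * H' \<and> G = smult e G' \<and> H = smult f H'"
proof (induction "degree d" arbitrary: d G H rule: less_induct)
  case less
  show ?case
  proof (cases "degree d = 0")
    case True
    then obtain d0 where d0: "d = [:d0:]" "d0 \<noteq> 0"
      using less.prems(2) by (metis degree_eq_zeroE pCons_eq_0_iff)
    have inv: "[:inverse d0:] * [:d0:] = 1" "[:d0:] * [:inverse d0:] = 1"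
      using d0(2) by (simp_all add: one_pCons)
    have "F = smult ([:inverse d0:] * [:d0:]) F"
      by (simp only: inv smult_1_left)
    also have "\<dots> = smult [:inverse d0:] (smult [:d0:] F)"
      by (simp only: smult_smult)
    also have "smult [:d0:] F = G * H"
      using less.prems(1) d0(1) by simp
    also have "smult [:inverse d0:] (G * H) = smult [:inverse d0:] G * H"
      by simp
    finally have "F = smult [:inverse d0:] G * H" .
    moreover have "G = smult ([:d0:] * [:inverse d0:]) G"
      by (simp only: inv smult_1_left)
    then have "G = smult [:d0:] (smult [:inverse d0:] G)"
      by (simp only: smult_smult)
    ultimately show ?thesis
      by (metis smult_1_left)
  next
    case False
    then obtain c d' where d': "d = [:-c, 1:] * d'" "degree d' < degree d"
      using alg_closed_linear_factor[OF alg] by blast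
    have "[:[:-c, 1:]:] * ([:d':] * F) = G * H"
      using less.prems(1) d'(1) by (simp add: mult.assoc)
    then obtain G1 H1 u v where GH1: "[:d':] * F = G1 * H1" "G = smult u G1" "H = smult v H1"
      using linear_const_factor_split by blast
    have "d' \<noteq> 0"
      using d'(1) less.prems(2) by auto
    then obtain G' H' e f where "F = G' * H'" "G1 = smult e G'" "H1 = smult f H'"
      using less.hyps[OF d'(2) GH1(1)] by blast
    then show ?thesis
      using GH1(2,3) by (intro exI[of _ G'] exI[of _ H'] exI[of _ "u * e"] exI[of _ "v * f"]) simp
  qed
qed

lemma fract_poly_clear_denominators:
  fixes u :: "'a::idom fract poly"
  shows "\<exists>e U. e \<noteq> 0 \<and> smult (to_fract e) u = fract_poly U"
proof (induction u)
  case 0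
  show ?case by (intro exI[of _ 1] exI[of _ 0]) simp
next
  case (pCons a u)
  then obtain e U where eU: "e \<noteq> 0" "smult (to_fract e) u = fract_poly U"
    by blast
  obtain n m where a: "a = Fract n m" "m \<noteq> 0"
    by (rule Fract_cases)
  have "to_fract (m * e) * a = to_fract (n * e)"
    using a by (simp add: Fract_conv_to_fract)
  moreover have "smult (to_fract (m * e)) u = fract_poly (smult m U)"
    using eU(2) by (simp flip: smult_smult)
  ultimately have "smult (to_fract (m * e)) (pCons a u) = fract_poly (pCons (n * e) (smult m U))"
    by (simp add: map_poly_pCons del: to_fract_mult fract_poly_smult)
  then show ?case
    using eU(1) a(2) by (intro exI[of _ "m * e"]) auto
qed

lemma irreducible_fract_poly:
  fixes p :: "'a::field poly poly"
  assumes alg: "\<And>q :: 'a poly. degree q > 0 \<Longrightarrow> \<exists>z. poly q z = 0"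
    and irr: "irreducible p" and deg: "degree p > 0"
  shows "irreducible (fract_poly p)"
proof (rule irreducibleI)
  show "fract_poly p \<noteq> 0"
    using deg by auto
  then show "\<not> is_unit (fract_poly p)"
    using deg by (simp add: is_unit_iff_degree degree_map_poly)
next
  fix g h assume gh: "fract_poly p = g * h"
  then have "g \<noteq> 0" "h \<noteq> 0"
    using deg by auto
  obtain e1 G where G: "e1 \<noteq> 0" "smult (to_fract e1) g = fract_poly G"
    using fract_poly_clear_denominators by blast
  obtain e2 H where H: "e2 \<noteq> 0" "smult (to_fract e2) h = fract_poly H"
    using fract_poly_clear_denominators by blast
  have "fract_poly ([:e1 * e2:] * p) = smult (to_fract e1) g * smult (to_fract e2) h"
    using gh by (simp add: mult_ac)
  also have "\<dots> = fract_poly (G * H)"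
    using G(2) H(2) by simp
  finally have "[:e1 * e2:] * p = G * H"
    by (simp only: fract_poly_eq_iff)
  moreover have "e1 * e2 \<noteq> 0"
    using G(1) H(1) by simp
  ultimately obtain G' H' e f where GH': "p = G' * H'" "G = smult e G'" "H = smult f H'"
    using const_factor_cancel[OF alg] by blast
  have "degree (fract_poly Q) = degree Q" for Q :: "'a poly poly"
    by (rule degree_map_poly) simp
  then have "degree g = degree G" "degree h = degree H"
    using G H by (metis degree_smult_eq to_fract_eq_0_iff)+
  then have "degree g \<le> degree G'" "degree h \<le> degree H'"
    using GH'(2,3) degree_smult_le by metis+
  moreover have "degree G' = 0 \<or> degree H' = 0"
    using irreducibleD[OF irr GH'(1)] by (auto simp: is_unit_poly_iff)
  ultimately show "is_unit g \<or> is_unit h"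
    using \<open>g \<noteq> 0\<close> \<open>h \<noteq> 0\<close> by (auto simp: is_unit_iff_degree)
qed

lemma fract_poly_dvd_imp_dvd:
  fixes p b :: "'a::field poly poly"
  assumes alg: "\<And>q :: 'a poly. degree q > 0 \<Longrightarrow> \<exists>z. poly q z = 0"
    and irr: "irreducible p" and deg: "degree p > 0"
    and dvd: "fract_poly p dvd fract_poly b"
  shows "p dvd b"
proof -
  obtain k where k: "fract_poly b = fract_poly p * k"
    using dvd ..
  obtain e K where K: "e \<noteq> 0" "smult (to_fract e) k = fract_poly K"
    using fract_poly_clear_denominators by blast
  have "fract_poly ([:e:] * b) = fract_poly p * smult (to_fract e) k"
    using k by simp
  also have "\<dots> = fract_poly (p * K)"
    using K(2) by simp
  finally have "[:e:] * b = p * K"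
    by (simp only: fract_poly_eq_iff)
  then obtain P' K' u v where PK': "b = P' * K'" "p = smult u P'"
    using const_factor_cancel[OF alg] K(1) by blast
  have "p = P' * [:u:]"
    using PK'(2) by simp
  moreover have "\<not> is_unit P'"
    using deg PK'(2) degree_smult_le[of u P'] by (auto simp: is_unit_poly_iff)
  ultimately have "is_unit [:u:]"
    using irreducibleD[OF irr] by blast
  then have "p dvd P'"
    using \<open>p = P' * [:u:]\<close> by (metis dvd_mult_unit_iff dvd_refl)
  then show ?thesis
    using PK'(1) by simp
qed

lemma field_poly_gcd_combination:
  fixes P B :: "'k::field poly"
  assumes "P \<noteq> 0"
  shows "\<exists>u v. u * P + v * B dvd P \<and> u * P + v * B dvd B"
proof -
  define J where "J = {u * P + v * B | u v. True}"
  have J_closed: "w - q * g \<in> J" if w: "w \<in> J" and g: "g \<in> J" for w g q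
  proof -
    obtain uw vw ug vg where "w = uw * P + vw * B" "g = ug * P + vg * B"
      using w g unfolding J_def by blast
    then have "w - q * g = (uw - q * ug) * P + (vw - q * vg) * B"
      by (simp add: algebra_simps)
    then show ?thesis
      unfolding J_def by blast
  qed
  have "P = 1 * P + 0 * B" "B = 0 * P + 1 * B"
    by simp_all
  then have "P \<in> J" "B \<in> J"
    unfolding J_def by blast+
  then obtain g where g: "g \<in> J" "g \<noteq> 0"
    and g_min: "\<And>w. w \<in> J \<Longrightarrow> w \<noteq> 0 \<Longrightarrow> degree g \<le> degree w"
    using ex_has_least_nat[of "\<lambda>w. w \<in> J \<and> w \<noteq> 0" P degree] assms by blast
  have "g dvd w" if "w \<in> J" for w
  proof -
    have "w mod g \<in> J"
      using J_closed[OF that g(1), of "w div g"] by (simp add: minus_div_mult_eq_mod)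
    then have "w mod g = 0"
      using g_min[of "w mod g"] degree_mod_less'[OF g(2), of w] by fastforce
    then show ?thesis
      by (simp add: mod_eq_0_iff_dvd)
  qed
  then show ?thesis
    using g(1) \<open>P \<in> J\<close> \<open>B \<in> J\<close> unfolding J_def by blast
qed

lemma field_poly_irreducible_bezout:
  fixes P B :: "'k::field poly"
  assumes irr: "irreducible P" and not_dvd: "\<not> P dvd B"
  shows "\<exists>u v. u * P + v * B = 1"
proof -
  have "P \<noteq> 0"
    using irr by auto
  then obtain u v where dvd_P: "u * P + v * B dvd P" and dvd_B: "u * P + v * B dvd B"
    using field_poly_gcd_combination by blast
  from dvd_P obtain h where "P = (u * P + v * B) * h" ..
  moreover have "\<not> is_unit h"
  proof
    assume "is_unit h"
    then have "P dvd u * P + v * B"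
      using \<open>P = (u * P + v * B) * h\<close> by (metis dvd_mult_unit_iff dvd_refl)
    then show False
      using not_dvd dvd_B dvd_trans by blast
  qed
  ultimately have "is_unit (u * P + v * B)"
    using irreducibleD[OF irr] by blast
  then obtain w where "1 = (u * P + v * B) * w"
    by (rule dvdE)
  then have "(w * u) * P + (w * v) * B = 1"
    by (simp add: algebra_simps)
  then show ?thesis
    by blast
qed

lemma irreducible_not_dvd_const_combination:
  fixes p b :: "'a::field poly poly"
  assumes alg: "\<And>q :: 'a poly. degree q > 0 \<Longrightarrow> \<exists>z. poly q z = 0"
    and irr: "irreducible p" and deg: "degree p > 0" and not_dvd: "\<not> p dvd b"
  shows "\<exists>U V d. U * p + V * b = [:d:] \<and> d \<noteq> 0"
proof -
  have "\<not> fract_poly p dvd fract_poly b"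
    using fract_poly_dvd_imp_dvd[OF alg irr deg] not_dvd by blast
  then obtain u v where uv: "u * fract_poly p + v * fract_poly b = 1"
    using field_poly_irreducible_bezout[OF irreducible_fract_poly[OF alg irr deg]] by blast
  obtain e1 U where U: "e1 \<noteq> 0" "smult (to_fract e1) u = fract_poly U"
    using fract_poly_clear_denominators by blast
  obtain e2 V where V: "e2 \<noteq> 0" "smult (to_fract e2) v = fract_poly V"
    using fract_poly_clear_denominators by blast
  have "fract_poly (smult e2 U * p + smult e1 V * b)
      = smult (to_fract (e1 * e2)) (u * fract_poly p + v * fract_poly b)"
    by (simp add: U(2)[symmetric] V(2)[symmetric] algebra_simps smult_add_right)
  also have "\<dots> = fract_poly [:e1 * e2:]"
    by (simp add: uv one_pCons map_poly_pCons)
  finally have "smult e2 U * p + smult e1 V * b = [:e1 * e2:]"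
    by (simp only: fract_poly_eq_iff)
  moreover have "e1 * e2 \<noteq> 0"
    using U(1) V(1) by simp
  ultimately show ?thesis
    by blast
qed

lemma finite_common_zeros:
  fixes p b :: "'a::field poly poly"
  assumes alg: "\<And>q :: 'a poly. degree q > 0 \<Longrightarrow> \<exists>z. poly q z = 0"
    and irr: "irreducible p" and deg: "degree p > 0" and not_dvd: "\<not> p dvd b"
  shows "finite {(c, a). poly2 p c a = 0 \<and> poly2 b c a = 0}"
proof -
  obtain U V d where UV: "U * p + V * b = [:d:]" and "d \<noteq> 0"
    using irreducible_not_dvd_const_combination[OF assms] by blast
  have "poly d c = 0" if "poly2 p c a = 0" "poly2 b c a = 0" for c a
    using arg_cong[OF UV, of "\<lambda>q. poly2 q c a"] that by (simp add: poly2_def)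
  then have "{(c, a). poly2 p c a = 0 \<and> poly2 b c a = 0} \<subseteq>
      Sigma {c. poly d c = 0} (\<lambda>c. {a. poly (map_poly (\<lambda>r. poly r c) p) a = 0})"
    by (auto simp: poly2_conv_map_poly)
  moreover have "finite (Sigma {c. poly d c = 0} (\<lambda>c. {a. poly (map_poly (\<lambda>r. poly r c) p) a = 0}))"
    using \<open>d \<noteq> 0\<close> by (intro finite_SigmaI poly_roots_finite irreducible_eval_x_nonzero[OF irr deg])
  ultimately show ?thesis
    using finite_subset by blast
qed

section \<open>Finiteness of the set of poles\<close>

lemma moebius_inv_Some_fps:
  fixes X :: "'a::field fls"
  assumes "0 < fls_subdegree (inverse X)"
  obtains F where "moebius_inv (Some s) X = fps_to_fls F" "F $ 0 = s"
  using assms by (intro that[of "fps_const s + fls_regpart (inverse X)"]) (simp_all add: moebius_inv_def)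

lemma eval2_fps_to_fls:
  fixes q :: "'a::field poly poly"
  obtains F where "eval2 q (fps_to_fls X) (fps_to_fls Y) = fps_to_fls F"
    "F $ 0 = poly2 q (X $ 0) (Y $ 0)"
proof -
  have inner: "fps_to_fls (poly (map_poly fps_const c) X) = poly (map_poly fls_const c) (fps_to_fls X)"
    "poly (map_poly fps_const c) X $ 0 = poly c (X $ 0)" for c :: "'a poly"
    by (induction c) (simp_all add: map_poly_pCons fls_times_fps_to_fls)
  show ?thesis
    by (rule that[of "poly (map_poly (\<lambda>c. poly (map_poly fps_const c) X) q) Y"]; induction q)
       (simp_all add: eval2_def poly2_def map_poly_pCons fls_times_fps_to_fls inner)
qed

lemma fps_quotient_not_pos_deg:
  fixes A B :: "'a::field fps"
  assumes "B $ 0 \<noteq> 0"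
  shows "\<not> pos_deg (fps_to_fls A / fps_to_fls B)"
proof (cases "A = 0")
  case False
  moreover have "B \<noteq> 0" "subdegree B = 0"
    using assms by auto
  ultimately have "fls_subdegree (fps_to_fls A / fps_to_fls B) = int (subdegree A)"
    by (simp add: fls_divide_subdegree fls_subdegree_fls_to_fps)
  then show ?thesis
    by (simp add: pos_deg_def)
qed (simp add: pos_deg_def)

lemma eval2_Fract_quotient_eq:
  fixes a b a' b' :: "'a::field poly poly"
  assumes "Fract a b = Fract a' b'" "b \<noteq> 0" "b' \<noteq> 0"
    and "eval2 b X Y \<noteq> 0" "eval2 b' X Y \<noteq> 0"
  shows "eval2 a X Y / eval2 b X Y = eval2 a' X Y / eval2 b' X Y"
proof -
  have "a * b' = a' * b"
    using assms(1-3) by (simp add: eq_fract)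
  then have "eval2 a X Y * eval2 b' X Y = eval2 a' X Y * eval2 b X Y"
    by (metis eval2_mult)
  then show ?thesis
    using assms(4,5) by (simp add: frac_eq_eq)
qed

text \<open>At an affine pole \<open>(s\<^sub>1, s\<^sub>2)\<close> both \<open>T\<^sup>-\<^sup>1 x\<close> and \<open>T\<^sup>-\<^sup>1 \<phi>\<close> are power series in
  \<open>x\<^sup>-\<^sup>1\<^sup>/\<^sup>n\<close> with constant terms \<open>s\<^sub>1\<close> and \<open>s\<^sub>2\<close>, so a denominator not vanishing at the
  point would make \<open>r\<close> bounded there.\<close>
lemma affine_pole_denominator_vanishes:
  fixes p :: "'a::field poly poly"
  assumes pole: "is_pole p r (Some s1, Some s2)"
    and r: "r = Fract a' b'" and "b' \<noteq> 0"
  shows "poly2 b' s1 s2 = 0"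
proof (rule ccontr)
  assume nonzero: "poly2 b' s1 s2 \<noteq> 0"
  obtain n a b and phi :: "'a fls" where "n > 0" "r = Fract a b" "b \<noteq> 0" "pos_deg phi"
    and pd: "pos_deg (eval2 a (moebius_inv (Some s1) (puiseux_x n)) (moebius_inv (Some s2) phi) /
                 eval2 b (moebius_inv (Some s1) (puiseux_x n)) (moebius_inv (Some s2) phi))"
    using pole unfolding is_pole_def Let_def by auto
  obtain FX where FX: "moebius_inv (Some s1) (puiseux_x n) = fps_to_fls FX" "FX $ 0 = s1"
    using moebius_inv_Some_fps[of "puiseux_x n"] \<open>n > 0\<close> by (auto simp: puiseux_x_def)
  obtain FY where FY: "moebius_inv (Some s2) phi = fps_to_fls FY" "FY $ 0 = s2"
    using moebius_inv_Some_fps[of phi] \<open>pos_deg phi\<close> by (auto simp: pos_deg_def)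
  obtain FA where FA: "eval2 a' (fps_to_fls FX) (fps_to_fls FY) = fps_to_fls FA"
    using eval2_fps_to_fls by blast
  obtain FB where FB: "eval2 b' (fps_to_fls FX) (fps_to_fls FY) = fps_to_fls FB"
    "FB $ 0 = poly2 b' s1 s2"
    using eval2_fps_to_fls FX(2) FY(2) by metis
  have "eval2 b (fps_to_fls FX) (fps_to_fls FY) \<noteq> 0"
    using pd by (auto simp: FX FY pos_deg_def)
  moreover have "eval2 b' (fps_to_fls FX) (fps_to_fls FY) \<noteq> 0"
    using FB nonzero by auto
  ultimately have "pos_deg (fps_to_fls FA / fps_to_fls FB)"
    using pd eval2_Fract_quotient_eq[of a b a' b'] \<open>r = Fract a b\<close> r \<open>b \<noteq> 0\<close> \<open>b' \<noteq> 0\<close>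
    by (simp add: FX FY FA FB(1))
  then show False
    using fps_quotient_not_pos_deg[of FB FA] FB(2) nonzero by simp
qed

lemma finite_poles:
  fixes p :: "'a::field poly poly"
  assumes alg: "\<And>q :: 'a poly. degree q > 0 \<Longrightarrow> \<exists>z. poly q z = 0"
    and irr: "irreducible p" and deg: "degree p > 0" and in_x: "\<exists>j. 0 < degree (coeff p j)"
    and r: "r \<in> loc_ring p"
  shows "finite {Q. is_pole p r Q}"
proof -
  obtain a b where b: "b \<noteq> 0" "\<not> p dvd b" "r = Fract a b"
    using r unfolding loc_ring_def by blast
  define Z where "Z = {(s1, s2). poly2 p s1 s2 = 0 \<and> poly2 b s1 s2 = 0}"
  have "{Q. is_pole p r Q} \<subseteq>
      {Q \<in> curve p. fst Q = None} \<union> {Q \<in> curve p. snd Q = None} \<union> map_prod Some Some ` Z"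
  proof
    fix Q assume "Q \<in> {Q. is_pole p r Q}"
    then have pole: "is_pole p r Q" and "Q \<in> curve p"
      by (auto simp: is_pole_def)
    show "Q \<in> {Q \<in> curve p. fst Q = None} \<union> {Q \<in> curve p. snd Q = None} \<union> map_prod Some Some ` Z"
    proof (cases "\<exists>s1 s2. Q = (Some s1, Some s2)")
      case True
      then obtain s1 s2 where Q: "Q = (Some s1, Some s2)"
        by blast
      have "poly2 p s1 s2 = 0"
        using \<open>Q \<in> curve p\<close> by (simp add: Q curve_def bihom_eval_affine)
      moreover have "poly2 b s1 s2 = 0"
        using affine_pole_denominator_vanishes[of p r s1 s2 a b] pole b(1,3) by (simp add: Q)
      ultimately show ?thesis
        by (auto simp: Q Z_def)
    next
      case False
      then show ?thesis
        using \<open>Q \<in> curve p\<close> by (cases Q) auto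
    qed
  qed
  moreover have "finite Z"
    unfolding Z_def using finite_common_zeros[OF alg irr deg b(2)] .
  ultimately show ?thesis
    using finite_curve_fst_eq[OF irr deg in_x] finite_curve_snd_eq[OF irr in_x]
    by (meson finite_Un finite_imageI finite_subset)
qed

lemma last_index_with:
  fixes M :: "nat \<Rightarrow> bool"
  assumes "finite {k. M k}" "M 0"
  obtains m where "M m" "\<And>k. 0 < k \<Longrightarrow> \<not> M (m + k)"
proof
  show "M (Max {k. M k})"
    using Max_in[OF assms(1)] assms(2) by blast
  show "\<not> M (Max {k. M k} + k)" if "0 < k" for k
    using Max_ge[OF assms(1), of "Max {k. M k} + k"] that by auto
qed

theorem proposition10:
  fixes p :: "'a::field_char_0 poly poly"
    and r :: "'a poly poly fract"
    and P :: "'a pt"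
  assumes alg_closed: "\<And>q :: 'a poly. degree q > 0 \<Longrightarrow> \<exists>z. poly q z = 0"
    and irr: "irreducible p"
    and not_in_Kx: "degy p > 0"
    and not_in_Ky: "\<exists>j. degree (coeff p j) > 0"
    and Fp: "Fp_trivial p"
    and r_loc: "r \<in> loc_ring p"
    and r_not_ideal: "r \<notin> loc_ideal p"
    and pole: "is_pole p r P"
    and inf: "infinite (orbit p P)"
  shows "\<exists>v :: nat \<Rightarrow> 'a pt. inj v \<and> (\<forall>k. v k \<in> orbit p P) \<and>
           (\<forall>k. adjacent (v k) (v (Suc k))) \<and>
           is_pole p r (v 0) \<and> (\<forall>k>0. \<not> is_pole p r (v k))"
proof -
  have deg: "degree p > 0"
    using not_in_Kx by (simp add: degy_def)
  obtain v where v0: "v 0 = P" and "inj v" and step: "\<And>k. (v k, v (Suc k)) \<in> orbit_step p"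
    using koenig_injective_ray[OF orbit_step_finitely_branching[OF irr deg not_in_Ky]] inf
    unfolding orbit_def by blast
  have reach: "(P, v k) \<in> (orbit_step p)\<^sup>*" for k
    by (induction k) (use v0 step in \<open>auto intro: rtrancl_into_rtrancl\<close>)
  have "finite {k. is_pole p r (v k)}"
    using finite_vimageI[OF finite_poles[OF alg_closed irr deg not_in_Ky r_loc] \<open>inj v\<close>]
    by (simp add: vimage_def)
  then obtain m where "is_pole p r (v m)" "\<And>k. 0 < k \<Longrightarrow> \<not> is_pole p r (v (m + k))"
    using last_index_with[of "\<lambda>k. is_pole p r (v k)"] pole v0 by auto
  moreover have "inj (\<lambda>k. v (m + k))"
    by (rule injI) (auto dest: injD[OF \<open>inj v\<close>])
  moreover have "adjacent (v (m + k)) (v (m + Suc k))" for k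
    using step[of "m + k"] \<open>inj v\<close> by (auto simp: orbit_step_def adjacent_def inj_eq)
  ultimately show ?thesis
    using reach by (intro exI[of _ "\<lambda>k. v (m + k)"]) (auto simp: orbit_def)
qed

end
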